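(* Let $k\ge2$, $n\ge k$, $\beta=\sum_{i=1}^n i^{k-1}$ and $c_i=i^{k-1}/\beta$ for $i=1,\dots,n$. In the position-randomized auction setting described in the context, if the $k-1$ disadvantaged bidders all use the initial bid sequence $c_1,\dots,c_n$ and the uniform distribution on permutations, then for every position-randomized strategy of the adversary ${\mathcal A}$, the expected number of objects ${\mathcal A}$ wins is at most $\frac{\beta-1}{n^{k-1}}$.
   Context: Auction model: there are $k$ bidders, one adversary ${\mathcal A}$ and $k-1$ disadvantaged bidders, and $n$ objects auctioned simultaneously. Each object is won by the highest bidder on it; if $m$ bidders tie for the highest bid, each wins with probability $1/m$. A position-randomized bidding algorithm: a bidder chooses an initial sequence $x_1,\dots,x_n$ of positive reals with $\sum x_j\le 1$ (budget) and a probability distribution on permutations $\sigma$ of $\{1,\dots,n\}$; he draws $\sigma$ and bids $x_j$ on object $\sigma(j)$. The disadvantaged bidders draw their permutations independently of each other, and ${\mathcal A}$'s permutation is drawn independently of theirs. *)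

theory Defs
  imports "HOL-Probability.Probability" "HOL-Combinatorics.Permutations"
begin

text \<open>Objects are 1..n; disadvantaged bidders are indexed 1..k-1.\<close>

definition perms :: "nat \<Rightarrow> (nat \<Rightarrow> nat) set" where
  "perms n = {\<sigma>. \<sigma> permutes {1..n}}"

text \<open>Bid placed on object j by a bidder with initial sequence x and permutation sigma
  (who bids x i on object sigma i).\<close>
definition bid_on :: "(nat \<Rightarrow> real) \<Rightarrow> (nat \<Rightarrow> nat) \<Rightarrow> nat \<Rightarrow> real" where
  "bid_on x \<sigma> j = x (inv \<sigma> j)"

text \<open>Probability that the adversary (bid a) wins an object against the bids b i,
  i in 1..k-1, of the disadvantaged bidders, with uniform tie-breaking.\<close>
definition adv_share :: "nat \<Rightarrow> real \<Rightarrow> (nat \<Rightarrow> real) \<Rightarrow> real" where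
  "adv_share k a b =
     (if \<forall>i\<in>{1..k-1}. b i \<le> a then 1 / real (1 + card {i\<in>{1..k-1}. b i = a}) else 0)"

definition adv_wins :: "nat \<Rightarrow> nat \<Rightarrow> (nat \<Rightarrow> real) \<Rightarrow> (nat \<Rightarrow> real)
     \<Rightarrow> (nat \<Rightarrow> nat) \<Rightarrow> (nat \<Rightarrow> nat \<Rightarrow> nat) \<Rightarrow> real" where
  "adv_wins k n x c \<tau> \<sigma>s = (\<Sum>j\<in>{1..n}. adv_share k (bid_on x \<tau> j) (\<lambda>i. bid_on c (\<sigma>s i) j))"

definition disadv_perms :: "nat \<Rightarrow> nat \<Rightarrow> (nat \<Rightarrow> nat \<Rightarrow> nat) pmf" where
  "disadv_perms k n = pmf_of_set (PiE {1..k-1} (\<lambda>_. perms n))"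

definition expected_adv_wins :: "nat \<Rightarrow> nat \<Rightarrow> (nat \<Rightarrow> real) \<Rightarrow> (nat \<Rightarrow> nat) pmf
     \<Rightarrow> (nat \<Rightarrow> real) \<Rightarrow> real" where
  "expected_adv_wins k n x q c =
     measure_pmf.expectation (pair_pmf q (disadv_perms k n))
       (\<lambda>(\<tau>, \<sigma>s). adv_wins k n x c \<tau> \<sigma>s)"

end

theory Submission
  imports Defs
begin

(* Fix the adversary's permutation and an object. The k - 1 opposing bids on that object are
   independent and uniform over c_1, ..., c_n, and a tie is won with probability at most 1/2, so a
   bid a wins with probability at most the mean of (N_le(a)/n)^(k-1) and (N_lt(a)/n)^(k-1), where
   N_le(a) and N_lt(a) count the c_l that are at most, resp. below, a. As c_l <= a iff
   l^(k-1) <= \<beta> a, also N_le(a)^(k-1) <= \<beta> a, so summing over the adversary's bids gives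
   the integer bound \<Sum> N_le^(k-1) <= \<beta>. If the sum is smaller than \<beta> we are done. If it
   equals \<beta>, then no bid has N_lt = N_le (that bid would make the bound strict), so each of the
   n >= 2 objects loses at least 1/2 through the tie term. *)

lemma card_permutes_with_value:
  assumes "finite S" "a \<in> S" "b \<in> S"
  shows "card {p. p permutes S \<and> p a = b} = fact (card S - 1)"
proof -
  have fixing_a: "{p. p permutes S \<and> p a = a} = {p. p permutes (S - {a})}"
  proof (intro set_eqI iffI)
    fix p assume "p \<in> {p. p permutes S \<and> p a = a}"
    then show "p \<in> {p. p permutes (S - {a})}"
      using permutes_superset[of p S "S - {a}"] by auto
  next
    fix p assume "p \<in> {p. p permutes (S - {a})}"
    then show "p \<in> {p. p permutes S \<and> p a = a}"
      using permutes_subset[of p "S - {a}" S] permutes_not_in[of p "S - {a}" a] by auto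
  qed
  have swap: "bij_betw (\<lambda>p. Transposition.transpose a b \<circ> p)
      {p. p permutes S \<and> p a = b} {p. p permutes S \<and> p a = a}"
    by (rule bij_betw_byWitness[where f' = "\<lambda>p. Transposition.transpose a b \<circ> p"])
      (auto simp: comp_assoc[symmetric] assms permutes_in_image
        intro!: permutes_compose permutes_swap_id)
  have "card {p. p permutes S \<and> p a = b} = card {p. p permutes (S - {a})}"
    using bij_betw_same_card[OF swap] fixing_a by simp
  also have "\<dots> = fact (card S - 1)"
    using card_permutations[of "S - {a}" "card S - 1"] assms by simp
  finally show ?thesis .
qed

lemma card_permutes_inv_in:
  assumes "finite S" "j \<in> S" "L \<subseteq> S"
  shows "card {p. p permutes S \<and> inv p j \<in> L} = card L * fact (card S - 1)"
proof -
  have "{p. p permutes S \<and> inv p j \<in> L} = (\<Union>l\<in>L. {p. p permutes S \<and> p l = j})"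
    by (auto simp: permutes_inverses; metis permutes_inverses(1))
  also have "card \<dots> = (\<Sum>l\<in>L. card {p. p permutes S \<and> p l = j})"
    using assms finite_subset by (intro card_UN_disjoint)
      (auto simp: finite_permutations dest: permutes_inj injD)
  also have "\<dots> = (\<Sum>l\<in>L. fact (card S - 1))"
    using assms by (intro sum.cong refl card_permutes_with_value) auto
  finally show ?thesis by simp
qed

lemma card_perms_bid_on:
  assumes "j \<in> {1..n}"
  shows "card {\<sigma> \<in> perms n. P (bid_on c \<sigma> j)} = card {l \<in> {1..n}. P (c l)} * fact (n - 1)"
proof -
  let ?L = "{l \<in> {1..n}. P (c l)}"
  have "inv \<sigma> j \<in> {1..n}" if "\<sigma> permutes {1..n}" for \<sigma>
    using permutes_in_image[OF permutes_inv[OF that]] assms by blast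
  then have "{\<sigma> \<in> perms n. P (bid_on c \<sigma> j)} = {\<sigma>. \<sigma> permutes {1..n} \<and> inv \<sigma> j \<in> ?L}"
    unfolding perms_def bid_on_def by auto
  also have "card \<dots> = card ?L * fact (card {1..n} - 1)"
    by (rule card_permutes_inv_in) (use assms in auto)
  finally show ?thesis by simp
qed

lemma card_PiE_all:
  assumes "finite I"
  shows "card {s \<in> PiE I (\<lambda>_. A). \<forall>i\<in>I. P (s i)} = card {a \<in> A. P a} ^ card I"
proof -
  have "{s \<in> PiE I (\<lambda>_. A). \<forall>i\<in>I. P (s i)} = PiE I (\<lambda>_. {a \<in> A. P a})"
    by (auto simp: PiE_iff extensional_def)
  then show ?thesis
    using assms by (simp add: card_PiE)
qed

lemma adv_share_le:
  "adv_share k a b \<le> (of_bool (\<forall>i\<in>{1..k-1}. b i \<le> a) + of_bool (\<forall>i\<in>{1..k-1}. b i < a)) / 2"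
proof (cases "\<forall>i\<in>{1..k-1}. b i \<le> a")
  case all_le: True
  let ?ties = "{i \<in> {1..k-1}. b i = a}"
  show ?thesis
  proof (cases "\<forall>i\<in>{1..k-1}. b i < a")
    case True
    then have "?ties = {}" by force
    then show ?thesis using all_le True by (simp add: adv_share_def)
  next
    case False
    then have "?ties \<noteq> {}" using all_le by force
    then have "card ?ties \<ge> 1" by (simp add: Suc_leI card_gt_0_iff)
    then show ?thesis using all_le False by (simp add: adv_share_def field_simps)
  qed
next
  case False
  then have "adv_share k a b = 0" by (simp add: adv_share_def)
  moreover have "\<not> (\<forall>i\<in>{1..k-1}. b i < a)"
    using False by (meson less_imp_le)
  ultimately show ?thesis using False by simp
qed

lemma finite_perms: "finite (perms n)"
  by (simp add: perms_def finite_permutations)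

lemma PiE_perms_nonempty: "PiE I (\<lambda>_. perms n) \<noteq> {}"
proof -
  have "id \<in> perms n" by (simp add: perms_def permutes_id)
  then show ?thesis by (auto simp: PiE_eq_empty_iff)
qed

lemma expectation_disadv_perms:
  "measure_pmf.expectation (disadv_perms k n) f
    = (\<Sum>s\<in>PiE {1..k-1} (\<lambda>_. perms n). f s) / card (PiE {1..k-1} (\<lambda>_. perms n))"
  unfolding disadv_perms_def
  by (rule integral_pmf_of_set) (simp_all add: PiE_perms_nonempty finite_perms finite_PiE)

lemma finite_set_disadv_perms: "finite (set_pmf (disadv_perms k n))"
  by (simp add: disadv_perms_def PiE_perms_nonempty finite_perms finite_PiE)

lemma expectation_disadv_perms_all:
  assumes "j \<in> {1..n}"
  shows "measure_pmf.expectation (disadv_perms k n)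
      (\<lambda>s. of_bool (\<forall>i\<in>{1..k-1}. P (bid_on c (s i) j)))
    = (card {l \<in> {1..n}. P (c l)} / n) ^ (k - 1)"
proof -
  let ?S = "PiE {1..k-1} (\<lambda>_. perms n)"
  let ?L = "{l \<in> {1..n}. P (c l)}"
  have "measure_pmf.expectation (disadv_perms k n)
      (\<lambda>s. of_bool (\<forall>i\<in>{1..k-1}. P (bid_on c (s i) j)))
    = card {s \<in> ?S. \<forall>i\<in>{1..k-1}. P (bid_on c (s i) j)} / card ?S"
    by (simp add: expectation_disadv_perms finite_perms finite_PiE Int_def conj_commute)
  also have "\<dots> = (card ?L * fact (n - 1)) ^ (k - 1) / fact n ^ (k - 1)"
    using card_PiE_all[of "{1..k-1}" "perms n" "\<lambda>\<sigma>. P (bid_on c \<sigma> j)"]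
      card_perms_bid_on[OF assms] card_permutations[of "{1..n}" n]
    by (simp add: card_PiE perms_def)
  also have "(fact n :: real) = n * fact (n - 1)"
    using assms by (simp add: fact_reduce)
  finally show ?thesis
    by (simp add: power_divide power_mult_distrib)
qed

definition adv_share_bound :: "nat \<Rightarrow> nat \<Rightarrow> (nat \<Rightarrow> real) \<Rightarrow> real \<Rightarrow> real" where
  "adv_share_bound k n c a =
     ((card {l \<in> {1..n}. c l \<le> a} / n) ^ (k - 1) + (card {l \<in> {1..n}. c l < a} / n) ^ (k - 1)) / 2"

lemma expectation_adv_share_le:
  assumes "j \<in> {1..n}"
  shows "measure_pmf.expectation (disadv_perms k n) (\<lambda>s. adv_share k a (\<lambda>i. bid_on c (s i) j))
    \<le> adv_share_bound k n c a"
proof -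
  let ?S = "PiE {1..k-1} (\<lambda>_. perms n)"
  let ?all_le = "\<lambda>s. of_bool (\<forall>i\<in>{1..k-1}. bid_on c (s i) j \<le> a) :: real"
  let ?all_less = "\<lambda>s. of_bool (\<forall>i\<in>{1..k-1}. bid_on c (s i) j < a) :: real"
  have "(\<Sum>s\<in>?S. adv_share k a (\<lambda>i. bid_on c (s i) j)) \<le> (\<Sum>s\<in>?S. (?all_le s + ?all_less s) / 2)"
    by (intro sum_mono adv_share_le)
  also have "\<dots> = ((\<Sum>s\<in>?S. ?all_le s) + (\<Sum>s\<in>?S. ?all_less s)) / 2"
    by (simp only: sum_divide_distrib[symmetric] sum.distrib)
  finally have "measure_pmf.expectation (disadv_perms k n) (\<lambda>s. adv_share k a (\<lambda>i. bid_on c (s i) j))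
      \<le> (measure_pmf.expectation (disadv_perms k n) ?all_le
          + measure_pmf.expectation (disadv_perms k n) ?all_less) / 2"
    unfolding expectation_disadv_perms
    by (rule divide_right_mono[THEN order_trans]) (simp_all add: add_divide_distrib)
  also have "\<dots> = adv_share_bound k n c a"
    unfolding adv_share_bound_def
    using expectation_disadv_perms_all[OF assms, of k "\<lambda>b. b \<le> a" c]
      expectation_disadv_perms_all[OF assms, of k "\<lambda>b. b < a" c]
    by simp
  finally show ?thesis .
qed

lemma sum_mean_powers_le:
  fixes u v :: "'a \<Rightarrow> nat" and w :: "'a \<Rightarrow> real" and B m :: nat
  assumes "finite J" and card_J: "2 \<le> card J" and m: "1 \<le> m"
    and v_le_u: "\<And>j. j \<in> J \<Longrightarrow> v j \<le> u j"
    and u_le_w: "\<And>j. j \<in> J \<Longrightarrow> real (u j) ^ m \<le> w j"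
    and u_less_w: "\<And>j. j \<in> J \<Longrightarrow> v j = u j \<Longrightarrow> real (u j) ^ m < w j"
    and w_sum: "sum w J \<le> B"
  shows "(\<Sum>j\<in>J. (real (u j) ^ m + real (v j) ^ m) / 2) \<le> real B - 1"
proof -
  define U where "U = (\<Sum>j\<in>J. u j ^ m)"
  have U_real: "real U = (\<Sum>j\<in>J. real (u j) ^ m)"
    unfolding U_def by simp
  have "real U \<le> sum w J"
    unfolding U_real by (intro sum_mono u_le_w)
  then have "real U \<le> B"
    using w_sum by linarith
  then consider (slack) "U < B" | (tight) "U = B" by linarith
  then show ?thesis
  proof cases
    case slack
    have "(\<Sum>j\<in>J. (real (u j) ^ m + real (v j) ^ m) / 2) \<le> (\<Sum>j\<in>J. real (u j) ^ m)"
      by (intro sum_mono) (simp add: v_le_u power_mono)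
    then show ?thesis using slack U_real by linarith
  next
    case tight
    have v_less_u: "v j < u j" if "j \<in> J" for j
    proof (rule ccontr)
      assume "\<not> v j < u j"
      then have "v j = u j" using v_le_u[OF that] by simp
      then have "(\<Sum>j\<in>J. real (u j) ^ m) < sum w J"
        using that u_le_w u_less_w assms(1) by (intro sum_strict_mono_ex1) auto
      then show False using tight U_real w_sum by simp
    qed
    have "real (v j) ^ m + 1 \<le> real (u j) ^ m" if "j \<in> J" for j
    proof -
      have "v j ^ m < u j ^ m"
        using v_less_u[OF that] m by (simp add: power_strict_mono)
      then have "real (v j ^ m + 1) \<le> real (u j ^ m)"
        by (simp only: of_nat_le_iff Suc_eq_plus1[symmetric] Suc_leI)
      then show ?thesis by simp
    qed
    then have "(\<Sum>j\<in>J. (real (u j) ^ m + real (v j) ^ m) / 2) \<le> (\<Sum>j\<in>J. real (u j) ^ m - 1 / 2)"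
      by (intro sum_mono) fastforce
    also have "\<dots> = real U - card J / 2"
      by (simp add: sum_subtractf U_real)
    finally show ?thesis using tight card_J by simp
  qed
qed

lemma power_card_downward_closed:
  fixes P :: "real \<Rightarrow> bool"
  assumes "finite T" "0 \<notin> T" "1 \<le> m" "P 0"
    and downward: "\<And>x y. x \<le> y \<Longrightarrow> P y \<Longrightarrow> P x"
    and P_elements: "\<And>l. l \<in> T \<Longrightarrow> P (real l ^ m)"
  shows "P (real (card T) ^ m)"
proof (cases "T = {}")
  case True
  then show ?thesis using assms(3,4) by (simp add: zero_power Suc_le_eq)
next
  case False
  have "T \<subseteq> {1..Max T}"
    using \<open>finite T\<close> \<open>0 \<notin> T\<close> by (auto simp: Suc_le_eq intro: gr0I)
  then have "card T \<le> Max T"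
    using card_mono[of "{1..Max T}"] by simp
  then have "real (card T) ^ m \<le> real (Max T) ^ m"
    by (simp add: power_mono)
  moreover have "P (real (Max T) ^ m)"
    using False \<open>finite T\<close> P_elements by simp
  ultimately show ?thesis using downward by blast
qed

lemma card_threshold_power_bounds:
  fixes \<beta> a :: real
  assumes "0 < \<beta>" "0 < a" "1 \<le> m" and c_eq: "\<And>l. l \<in> {1..n} \<Longrightarrow> c l = real l ^ m / \<beta>"
  shows "real (card {l \<in> {1..n}. c l \<le> a}) ^ m \<le> \<beta> * a"
    and "card {l \<in> {1..n}. c l < a} = card {l \<in> {1..n}. c l \<le> a}
      \<Longrightarrow> real (card {l \<in> {1..n}. c l \<le> a}) ^ m < \<beta> * a"
proof -
  let ?T_le = "{l \<in> {1..n}. c l \<le> a}" and ?T_less = "{l \<in> {1..n}. c l < a}"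
  have threshold_iff:
    "c l \<le> a \<longleftrightarrow> real l ^ m \<le> \<beta> * a" "c l < a \<longleftrightarrow> real l ^ m < \<beta> * a" if "l \<in> {1..n}" for l
    using c_eq[OF that] \<open>0 < \<beta>\<close> by (simp_all add: pos_divide_le_eq pos_divide_less_eq mult.commute)
  have "real (card ?T_le) ^ m \<le> \<beta> * a"
    by (rule power_card_downward_closed[where P = "\<lambda>y. y \<le> \<beta> * a"])
      (use assms threshold_iff in auto)
  moreover have "real (card ?T_less) ^ m < \<beta> * a"
    by (rule power_card_downward_closed[where P = "\<lambda>y. y < \<beta> * a"])
      (use assms threshold_iff in auto)
  moreover have "?T_less = ?T_le" if "card ?T_less = card ?T_le"
    using that by (intro card_subset_eq) auto
  ultimately show "real (card ?T_le) ^ m \<le> \<beta> * a"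
    and "card ?T_less = card ?T_le \<Longrightarrow> real (card ?T_le) ^ m < \<beta> * a"
    by auto
qed

lemma sum_adv_share_bound_le:
  fixes k n :: nat and \<beta> :: real and c x :: "nat \<Rightarrow> real"
  assumes "k \<ge> 2" and "n \<ge> k"
    and \<beta>_def: "\<beta> = (\<Sum>i=1..n. real i ^ (k - 1))"
    and c_eq: "\<And>i. i \<in> {1..n} \<Longrightarrow> c i = real i ^ (k - 1) / \<beta>"
    and x_pos: "\<And>j. j \<in> {1..n} \<Longrightarrow> x j > 0"
    and x_sum: "(\<Sum>j=1..n. x j) \<le> 1"
  shows "(\<Sum>j=1..n. adv_share_bound k n c (x j)) \<le> (\<beta> - 1) / real n ^ (k - 1)"
proof -
  define m where "m = k - 1"
  define B where "B = (\<Sum>i=1..n. i ^ m)"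
  define u where "u j = card {l \<in> {1..n}. c l \<le> x j}" for j
  define v where "v j = card {l \<in> {1..n}. c l < x j}" for j
  have m: "1 \<le> m" using assms(1) by (simp add: m_def)
  have \<beta>_B: "\<beta> = real B"
    by (simp add: \<beta>_def B_def m_def)
  have "1 ^ m \<le> B"
    unfolding B_def using assms(1,2) by (intro member_le_sum) auto
  then have \<beta>_pos: "0 < \<beta>" by (simp add: \<beta>_B)
  have "(\<Sum>j=1..n. (real (u j) ^ m + real (v j) ^ m) / 2) \<le> real B - 1"
  proof (rule sum_mean_powers_le[where w = "\<lambda>j. \<beta> * x j"])
    show "2 \<le> card {1..n}" using assms(1,2) by simp
    show "v j \<le> u j" for j
      unfolding u_def v_def by (intro card_mono) auto
    show "real (u j) ^ m \<le> \<beta> * x j" if "j \<in> {1..n}" for j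
      unfolding u_def using card_threshold_power_bounds(1)[OF \<beta>_pos x_pos[OF that] m] c_eq
      by (simp add: m_def)
    show "real (u j) ^ m < \<beta> * x j" if "j \<in> {1..n}" "v j = u j" for j
      using that card_threshold_power_bounds(2)[OF \<beta>_pos x_pos[OF that(1)] m] c_eq
      unfolding u_def v_def by (simp add: m_def)
    show "(\<Sum>j=1..n. \<beta> * x j) \<le> real B"
      using x_sum \<beta>_pos by (simp add: \<beta>_B[symmetric] sum_distrib_left[symmetric])
  qed (use m in simp_all)
  moreover have "(\<Sum>j=1..n. adv_share_bound k n c (x j))
      = (\<Sum>j=1..n. (real (u j) ^ m + real (v j) ^ m) / 2) / real n ^ m"
    using assms(1,2) unfolding sum_divide_distrib adv_share_bound_def u_def v_def m_def
    by (intro sum.cong refl) (simp add: power_divide field_simps)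
  ultimately show ?thesis
    by (simp add: \<beta>_B m_def divide_right_mono)
qed

lemma expectation_adv_wins_le:
  assumes "\<tau> \<in> perms n"
  shows "measure_pmf.expectation (disadv_perms k n) (adv_wins k n x c \<tau>)
    \<le> (\<Sum>j=1..n. adv_share_bound k n c (x j))"
proof -
  let ?E = "measure_pmf.expectation (disadv_perms k n)"
  have "?E (adv_wins k n x c \<tau>) = (\<Sum>j=1..n. ?E (\<lambda>s. adv_share k (bid_on x \<tau> j) (\<lambda>i. bid_on c (s i) j)))"
    unfolding expectation_disadv_perms adv_wins_def by (subst sum.swap) (simp add: sum_divide_distrib)
  also have "\<dots> \<le> (\<Sum>j=1..n. adv_share_bound k n c (x (inv \<tau> j)))"
    unfolding bid_on_def[of x] by (intro sum_mono expectation_adv_share_le)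
  also have "\<dots> = (\<Sum>j=1..n. adv_share_bound k n c (x j))"
    using assms unfolding perms_def
    by (intro sum.reindex_bij_betw permutes_imp_bij permutes_inv) simp
  finally show ?thesis .
qed

lemma expectation_pair_pmf_le:
  fixes f :: "'a \<times> 'b \<Rightarrow> real"
  assumes "finite (set_pmf p)" "finite (set_pmf r)"
    and "\<And>a. a \<in> set_pmf p \<Longrightarrow> measure_pmf.expectation r (\<lambda>b. f (a, b)) \<le> M"
  shows "measure_pmf.expectation (pair_pmf p r) f \<le> M"
proof -
  have "pair_pmf p r = p \<bind> (\<lambda>a. map_pmf (Pair a) r)"
    by (simp add: pair_pmf_def map_pmf_def)
  then have "measure_pmf.expectation (pair_pmf p r) f
      = (\<Sum>a\<in>set_pmf p. pmf p a * measure_pmf.expectation r (\<lambda>b. f (a, b)))"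
    using assms(1,2) by (simp add: pmf_expectation_bind[of "set_pmf p"])
  also have "\<dots> \<le> (\<Sum>a\<in>set_pmf p. pmf p a * M)"
    by (intro sum_mono mult_left_mono assms(3)) auto
  also have "\<dots> = M"
    using sum_pmf_eq_1[OF assms(1) order_refl] by (simp add: sum_distrib_right[symmetric])
  finally show ?thesis .
qed

theorem lemma4p4:
  fixes k n :: nat and \<beta> :: real and c x :: "nat \<Rightarrow> real" and q :: "(nat \<Rightarrow> nat) pmf"
  assumes "k \<ge> 2" and "n \<ge> k"
    and "\<beta> = (\<Sum>i=1..n. real i ^ (k - 1))"
    and "\<And>i. i \<in> {1..n} \<Longrightarrow> c i = real i ^ (k - 1) / \<beta>"
    and "\<And>j. j \<in> {1..n} \<Longrightarrow> x j > 0"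
    and "(\<Sum>j=1..n. x j) \<le> 1"
    and "set_pmf q \<subseteq> perms n"
  shows "expected_adv_wins k n x q c \<le> (\<beta> - 1) / real n ^ (k - 1)"
  unfolding expected_adv_wins_def
proof (rule expectation_pair_pmf_le)
  show "finite (set_pmf q)"
    using assms(7) finite_perms finite_subset by blast
  show "finite (set_pmf (disadv_perms k n))"
    by (rule finite_set_disadv_perms)
  show "measure_pmf.expectation (disadv_perms k n) (\<lambda>s. case (\<tau>, s) of (\<tau>, s) \<Rightarrow> adv_wins k n x c \<tau> s)
      \<le> (\<beta> - 1) / real n ^ (k - 1)" if "\<tau> \<in> set_pmf q" for \<tau>
    using expectation_adv_wins_le[of \<tau> n k x c] sum_adv_share_bound_le[OF assms(1-6)] that assms(7)
    by fastforce
qed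

end
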